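(* There exist finite MDPs $\mathcal{M}_1,\mathcal{M}_2,\mathcal{M}_3$, all defined on the same state and action space, such that $d_V(\mathcal{M}_1,\mathcal{M}_3)>d_V(\mathcal{M}_1,\mathcal{M}_2)+d_V(\mathcal{M}_2,\mathcal{M}_3)$. Hence $d_V$ is not a metric in general.
   Context: A finite MDP has finite state space, finite action space, transition distribution, bounded random reward, discount $\gamma\in[0,1)$ and a single initial state $s^\circ$. $V^\pi_i$ denotes the expected discounted value at $s^\circ$ of stationary policy $\pi$ in $\mathcal{M}_i$, $V^*_i$ the optimal value and $\pi^*_i$ the optimal policy (the lexicographically first if several). For MDPs on the same state and action spaces, $d_V(\mathcal{M}_i,\mathcal{M}_j)=\max\{V_i^*-V_i^{\pi^*_j},\,V_j^*-V_j^{\pi^*_i}\}$. *)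

theory Defs
  imports "HOL-Probability.Probability"
begin

text \<open>States are 0..<n_S, actions are 0..<n_A (the natural orders on
  these index sets define the lexicographic order on policies).\<close>
record mdp =
  nS :: nat
  nA :: nat
  trans :: "nat \<Rightarrow> nat \<Rightarrow> nat pmf"
  rew :: "nat \<Rightarrow> nat \<Rightarrow> real pmf"
  disc :: real
  init :: nat

definition wf_mdp :: "mdp \<Rightarrow> bool" where
  "wf_mdp M \<longleftrightarrow> 0 < nS M \<and> 0 < nA M \<and> init M < nS M
     \<and> 0 \<le> disc M \<and> disc M < 1
     \<and> (\<forall>s<nS M. \<forall>a<nA M. set_pmf (trans M s a) \<subseteq> {..<nS M})
     \<and> (\<exists>B. \<forall>s<nS M. \<forall>a<nA M. \<forall>x\<in>set_pmf (rew M s a). \<bar>x\<bar> \<le> B)"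

definition policies :: "mdp \<Rightarrow> (nat \<Rightarrow> nat) set" where
  "policies M = {\<pi>. (\<forall>s<nS M. \<pi> s < nA M) \<and> (\<forall>s\<ge>nS M. \<pi> s = 0)}"

definition exp_rew :: "mdp \<Rightarrow> nat \<Rightarrow> nat \<Rightarrow> real" where
  "exp_rew M s a = measure_pmf.expectation (rew M s a) (\<lambda>x. x)"

fun state_dist :: "mdp \<Rightarrow> (nat \<Rightarrow> nat) \<Rightarrow> nat \<Rightarrow> nat \<Rightarrow> real" where
  "state_dist M \<pi> 0 s' = (if s' = init M then 1 else 0)"
| "state_dist M \<pi> (Suc t) s' =
     (\<Sum>s<nS M. state_dist M \<pi> t s * pmf (trans M s (\<pi> s)) s')"

definition pol_value :: "mdp \<Rightarrow> (nat \<Rightarrow> nat) \<Rightarrow> real" where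
  "pol_value M \<pi> = (\<Sum>t. disc M ^ t * (\<Sum>s<nS M. state_dist M \<pi> t s * exp_rew M s (\<pi> s)))"

definition opt_value :: "mdp \<Rightarrow> real" where
  "opt_value M = Max (pol_value M ` policies M)"

definition lex_less :: "nat \<Rightarrow> (nat \<Rightarrow> nat) \<Rightarrow> (nat \<Rightarrow> nat) \<Rightarrow> bool" where
  "lex_less n \<pi> \<pi>' \<longleftrightarrow> (\<exists>k<n. (\<forall>j<k. \<pi> j = \<pi>' j) \<and> \<pi> k < \<pi>' k)"

definition opt_policies :: "mdp \<Rightarrow> (nat \<Rightarrow> nat) set" where
  "opt_policies M = {\<pi> \<in> policies M. pol_value M \<pi> = opt_value M}"

definition opt_policy :: "mdp \<Rightarrow> (nat \<Rightarrow> nat)" where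
  "opt_policy M = (THE \<pi>. \<pi> \<in> opt_policies M \<and>
      (\<forall>\<pi>'\<in>opt_policies M. \<pi>' \<noteq> \<pi> \<longrightarrow> lex_less (nS M) \<pi> \<pi>'))"

definition dV :: "mdp \<Rightarrow> mdp \<Rightarrow> real" where
  "dV Mi Mj = max (opt_value Mi - pol_value Mi (opt_policy Mj))
                  (opt_value Mj - pol_value Mj (opt_policy Mi))"

end

theory Submission imports Defs begin

text \<open>With discount 0 a one-state MDP is a bandit: the value of a policy is the reward of
  the arm it picks, so \<open>d\<^sub>V\<close> only sees which arm each MDP's optimal policy picks.
  When all arms of \<open>M\<^sub>1\<close> are tied, the lexicographic tie-break picks arm 0, which is badly
  suboptimal for \<open>M\<^sub>3\<close>; an intermediate \<open>M\<^sub>2\<close> that strictly prefers arm 1, as \<open>M\<^sub>3\<close> does,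
  is at distance 0 from \<open>M\<^sub>3\<close> and only half as far from \<open>M\<^sub>1\<close>.\<close>

lemma lex_less_asym: "lex_less n \<pi> \<pi>' \<Longrightarrow> \<not> lex_less n \<pi>' \<pi>"
  unfolding lex_less_def by (metis less_asym linorder_neqE_nat)

lemma opt_policy_eqI:
  assumes "\<pi> \<in> opt_policies M"
    and "\<And>\<pi>'. \<pi>' \<in> opt_policies M \<Longrightarrow> \<pi>' \<noteq> \<pi> \<Longrightarrow> lex_less (nS M) \<pi> \<pi>'"
  shows "opt_policy M = \<pi>"
  unfolding opt_policy_def
proof (rule the_equality)
  fix \<sigma> assume "\<sigma> \<in> opt_policies M \<and> (\<forall>\<pi>'\<in>opt_policies M. \<pi>' \<noteq> \<sigma> \<longrightarrow> lex_less (nS M) \<sigma> \<pi>')"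
  then show "\<sigma> = \<pi>" using assms lex_less_asym by metis
qed (use assms in blast)

definition bandit :: "nat \<Rightarrow> (nat \<Rightarrow> real) \<Rightarrow> mdp" where
  "bandit k f = \<lparr>nS = 1, nA = k, trans = (\<lambda>s a. return_pmf 0),
     rew = (\<lambda>s a. return_pmf (f a)), disc = 0, init = 0\<rparr>"

lemma bandit_simps [simp]:
  "nS (bandit k f) = 1" "nA (bandit k f) = k" "trans (bandit k f) = (\<lambda>s a. return_pmf 0)"
  "rew (bandit k f) = (\<lambda>s a. return_pmf (f a))" "disc (bandit k f) = 0" "init (bandit k f) = 0"
  by (simp_all add: bandit_def)

lemma wf_mdp_bandit: "0 < k \<Longrightarrow> wf_mdp (bandit k f)"
  unfolding wf_mdp_def
  by (auto intro!: exI[of _ "\<Sum>a<k. \<bar>f a\<bar>"] member_le_sum[of _ _ "\<lambda>a. \<bar>f a\<bar>", simplified])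

definition arm_policy :: "nat \<Rightarrow> nat \<Rightarrow> nat" where
  "arm_policy a = (\<lambda>s. if s = 0 then a else 0)"

lemma arm_policy_eq_iff [simp]: "arm_policy a = arm_policy b \<longleftrightarrow> a = b"
  unfolding arm_policy_def fun_eq_iff by auto

lemma policies_bandit: "policies (bandit k f) = arm_policy ` {..<k}"
proof (intro set_eqI iffI)
  fix \<pi> assume "\<pi> \<in> policies (bandit k f)"
  then have "\<pi> 0 < k" and "\<pi> = arm_policy (\<pi> 0)"
    unfolding policies_def arm_policy_def fun_eq_iff by auto
  then show "\<pi> \<in> arm_policy ` {..<k}" by blast
qed (auto simp: policies_def arm_policy_def)

lemma pol_value_bandit: "pol_value (bandit k f) \<pi> = f (\<pi> 0)"
proof -
  have "(\<lambda>t. disc (bandit k f) ^ t * (\<Sum>s<nS (bandit k f). state_dist (bandit k f) \<pi> t s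
          * exp_rew (bandit k f) s (\<pi> s))) = (\<lambda>t. if t = 0 then f (\<pi> 0) else 0)"
    by (auto simp: exp_rew_def)
  then show ?thesis
    unfolding pol_value_def using sums_single[of 0 "\<lambda>_. f (\<pi> 0)"] sums_unique by metis
qed

lemma opt_value_bandit:
  assumes "a < k" and "\<And>b. b < k \<Longrightarrow> f b \<le> f a"
  shows "opt_value (bandit k f) = f a"
  unfolding opt_value_def policies_bandit image_image pol_value_bandit
  using assms by (intro Max_eqI) (auto simp: arm_policy_def)

lemma opt_policy_bandit:
  assumes "a < k" and "\<And>b. b < k \<Longrightarrow> f b \<le> f a" and "\<And>b. b < a \<Longrightarrow> f b < f a"
  shows "opt_policy (bandit k f) = arm_policy a"
proof (rule opt_policy_eqI)
  have opt: "opt_policies (bandit k f) = {arm_policy b | b. b < k \<and> f b = f a}"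
    using opt_value_bandit[of a k f, OF assms(1,2)]
    by (auto simp: opt_policies_def policies_bandit pol_value_bandit arm_policy_def)
  show "arm_policy a \<in> opt_policies (bandit k f)"
    unfolding opt using assms(1) by blast
  fix \<pi>' assume "\<pi>' \<in> opt_policies (bandit k f)" "\<pi>' \<noteq> arm_policy a"
  then obtain b where "\<pi>' = arm_policy b" "f b = f a" "b \<noteq> a"
    unfolding opt by auto
  with assms(3)[of b] have "a < b" by linarith
  then show "lex_less (nS (bandit k f)) (arm_policy a) \<pi>'"
    unfolding lex_less_def \<open>\<pi>' = arm_policy b\<close> by (simp add: arm_policy_def)
qed

theorem lemma5:
  shows "\<exists>M1 M2 M3. wf_mdp M1 \<and> wf_mdp M2 \<and> wf_mdp M3
     \<and> nS M1 = nS M2 \<and> nS M2 = nS M3 \<and> nA M1 = nA M2 \<and> nA M2 = nA M3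
     \<and> dV M1 M3 > dV M1 M2 + dV M2 M3"
proof (intro exI conjI)
  define f1 f2 f3 :: "nat \<Rightarrow> real"
    where "f1 = (\<lambda>a. 1)" and "f2 = (\<lambda>a. if a = 0 then 1/2 else 1)"
      and "f3 = (\<lambda>a. if a = 0 then 0 else 1)"
  let ?M1 = "bandit 2 f1" and ?M2 = "bandit 2 f2" and ?M3 = "bandit 2 f3"
  have arm0_best: "opt_value ?M1 = 1" "opt_policy ?M1 = arm_policy 0"
    by (simp_all add: f1_def opt_value_bandit[of 0] opt_policy_bandit[of 0])
  have arm1_best: "opt_value ?M2 = 1" "opt_policy ?M2 = arm_policy 1"
    "opt_value ?M3 = 1" "opt_policy ?M3 = arm_policy 1"
    by (simp_all add: f2_def f3_def less_2_cases_iff opt_value_bandit[of 1] opt_policy_bandit[of 1])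
  show "wf_mdp ?M1" "wf_mdp ?M2" "wf_mdp ?M3" by (simp_all add: wf_mdp_bandit)
  show "nS ?M1 = nS ?M2" "nS ?M2 = nS ?M3" "nA ?M1 = nA ?M2" "nA ?M2 = nA ?M3" by simp_all
  show "dV ?M1 ?M3 > dV ?M1 ?M2 + dV ?M2 ?M3"
    unfolding dV_def arm0_best arm1_best pol_value_bandit
    by (simp add: f1_def f2_def f3_def arm_policy_def)
qed

end
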